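(* Let $n,t$ be positive integers and let $\mathcal{B}$ be a partition of $[n]=\{1,\ldots,n\}$ into $t$ nonempty blocks. For every nonempty $\mathcal{B}'\subseteq\mathcal{B}$ and every $\underline{i}\in[n]$, $$K[\underline{i},\mathcal{B}']=\min_{\underline{B}\in\mathcal{B}'}\Big\{\delta(\underline{i},\underline{B})+K[\omega(\underline{i},\underline{B})+_n1,\ \mathcal{B}'\setminus\{\underline{B}\}]\Big\},$$ where for the empty set one uses the convention $K[1,\varnothing]=0$ and $K[\underline{i},\varnothing]=1$ for $\underline{i}\neq1$. In particular, the minimum number of segments of a valid placement of $\mathcal{B}$, which is $K[1,\mathcal{B}]$, is computed by this recurrence.
   Context: Each block $B\in\mathcal{B}$ is written as an increasing sequence $\langle i_1<i_2<\cdots<i_\ell\rangle$ of its elements. Let $A(n)$ be the infinite sequence obtained by concatenating infinitely many copies of $\langle1,2,\ldots,n\rangle$. Each copy is called a segment, and the segments are numbered $1,2,3,\ldots$. A position of $A(n)$ is a pair $(\kappa,v)$ with segment index $\kappa\ge1$ and value $v\in[n]$. Positions are ordered lexicographically. For a nonempty $\mathcal{B}'\subseteq\mathcal{B}$, a placement of $\mathcal{B}'$ assigns to each element $x\in\bigcup_{B\in\mathcal{B}'}B$ a position $(\kappa_x,x)$ of $A(n)$, with distinct elements receiving distinct positions. A placement is valid if, for any two distinct blocks $B,C\in\mathcal{B}'$, no element of $B$ is placed strictly between the smallest and the largest positions occupied by elements of $C$. The number of segments used by a placement is the largest segment index $\kappa_x$ occurring in it. For $\underline{i}\in[n]$, $K[\underline{i},\mathcal{B}']$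 denotes the minimum number of segments used by a valid placement of $\mathcal{B}'$ in which every element is placed at a position $\ge(1,\underline{i})$. For $\underline{i}\in[n]$ and $B=\langle i_1<\cdots<i_\ell\rangle$: - If $\underline{i}\le i_1$ or $i_\ell<\underline{i}$, then $\omega(\underline{i},B)=i_\ell$. - Otherwise $i_l<\underline{i}\le i_{l+1}$ for a unique $l\in[\ell-1]$, and $\omega(\underline{i},B)=i_l$. $\delta(\underline{i},B)=0$ if $\underline{i}\le i_1$ and $i_\ell<n$, and $\delta(\underline{i},B)=1$ otherwise. $a+_n1$ denotes $a+1$ reduced modulo $n$, with result $0$ replaced by $n$; thus $a+_n1=a+1$ for $a<n$ and $n+_n1=1$. A valid placement of $\mathcal{B}$ corresponds to a solution of the Train Marshalling Problem: placing element $i$ in segment $\kappa$ means sending railcar $i$ to classification track $\kappa$. The minimum number of classification tracks therefore equals $K[1,\mathcal{B}]$. *)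

theory Defs
  imports Main "HOL-Library.Disjoint_Sets" "HOL-Library.Product_Lexorder"
begin

(* Positions of A(n) are pairs (segment index, value), ordered lexicographically
   (the order on nat \<times> nat from Product_Lexorder).
   A placement of Bs' is a segment assignment kappa : element x goes to (kappa x, x);
   distinct elements automatically get distinct positions. *)

definition pos :: "(nat \<Rightarrow> nat) \<Rightarrow> nat \<Rightarrow> nat \<times> nat" where
  "pos kappa x = (kappa x, x)"

definition valid_placement :: "nat set set \<Rightarrow> (nat \<Rightarrow> nat) \<Rightarrow> bool" where
  "valid_placement Bs kappa \<longleftrightarrow>
     (\<forall>x\<in>\<Union>Bs. kappa x \<ge> 1) \<and>
     (\<forall>B\<in>Bs. \<forall>C\<in>Bs. B \<noteq> C \<longrightarrow>
        (\<forall>b\<in>B. \<not> (Min (pos kappa ` C) < pos kappa b \<and> pos kappa b < Max (pos kappa ` C))))"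

definition segments_used :: "nat set set \<Rightarrow> (nat \<Rightarrow> nat) \<Rightarrow> nat" where
  "segments_used Bs kappa = Max (kappa ` \<Union>Bs)"

definition K :: "nat \<Rightarrow> nat set set \<Rightarrow> nat" where
  "K i Bs = (if Bs = {} then (if i = 1 then 0 else 1)
             else (LEAST m. \<exists>kappa. valid_placement Bs kappa
                        \<and> (\<forall>x\<in>\<Union>Bs. (1, i) \<le> pos kappa x)
                        \<and> segments_used Bs kappa = m))"

definition omega :: "nat \<Rightarrow> nat set \<Rightarrow> nat" where
  "omega i B = (if i \<le> Min B \<or> Max B < i then Max B else Max {x\<in>B. x < i})"

definition delta :: "nat \<Rightarrow> nat \<Rightarrow> nat set \<Rightarrow> nat" where
  "delta n i B = (if i \<le> Min B \<and> Max B < n then 0 else 1)"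

definition plus_n1 :: "nat \<Rightarrow> nat \<Rightarrow> nat" where
  "plus_n1 n a = (if (a + 1) mod n = 0 then n else (a + 1) mod n)"

end

theory Submission
  imports Defs
begin

(* Let B be the block holding the first occupied position of a valid placement from (1, i).
   No element of another block lies inside the span of B, so all other blocks come after all
   of B, in particular after its element omega i B, which cannot sit before the position it
   gets when B is placed greedily from (1, i). Hence the other blocks lie at or after
   (1 + delta, omega +_n 1), and shifting them down by delta segments gives a valid placement
   from (1, omega +_n 1): K is at least the minimum. Conversely, B placed greedily from (1, i),
   followed by an optimal placement of the other blocks from (1, omega +_n 1) shifted up by
   delta segments, is valid: K is at most every term. *)

definition block_family :: "nat \<Rightarrow> nat set set \<Rightarrow> bool" where
  "block_family n S \<longleftrightarrow> disjoint S \<and> {} \<notin> S \<and> \<Union>S \<subseteq> {1..n}"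

lemma block_family_subset: "block_family n S \<Longrightarrow> T \<subseteq> S \<Longrightarrow> block_family n T"
  unfolding block_family_def by (auto intro: pairwise_subset)

lemma block_family_finite:
  assumes "block_family n S"
  shows "finite (\<Union>S)" "finite S"
  using assms finite_subset[of "\<Union>S" "{1..n}"] finite_UnionD
  unfolding block_family_def by auto

lemma block_family_Union_empty_iff: "block_family n S \<Longrightarrow> \<Union>S = {} \<longleftrightarrow> S = {}"
  unfolding block_family_def by auto

lemma block_family_if_partition_on: "partition_on {1..n} S \<Longrightarrow> block_family n S"
  unfolding partition_on_def block_family_def by simp

definition non_interleaving :: "nat set set \<Rightarrow> (nat \<Rightarrow> nat) \<Rightarrow> bool" where
  "non_interleaving S \<kappa> \<longleftrightarrow> (\<forall>B\<in>S. \<forall>C\<in>S. B \<noteq> C \<longrightarrow>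
     (\<forall>b\<in>B. \<forall>c\<in>C. \<forall>c'\<in>C. \<not> (pos \<kappa> c < pos \<kappa> b \<and> pos \<kappa> b < pos \<kappa> c')))"

lemma non_interleavingI:
  "(\<And>B C b c c'. B \<in> S \<Longrightarrow> C \<in> S \<Longrightarrow> B \<noteq> C \<Longrightarrow> b \<in> B \<Longrightarrow> c \<in> C \<Longrightarrow> c' \<in> C \<Longrightarrow>
      pos \<kappa> c < pos \<kappa> b \<Longrightarrow> pos \<kappa> b < pos \<kappa> c' \<Longrightarrow> False) \<Longrightarrow> non_interleaving S \<kappa>"
  unfolding non_interleaving_def by blast

lemma non_interleavingD:
  "non_interleaving S \<kappa> \<Longrightarrow> B \<in> S \<Longrightarrow> C \<in> S \<Longrightarrow> B \<noteq> C \<Longrightarrow> b \<in> B \<Longrightarrow> c \<in> C \<Longrightarrow> c' \<in> C \<Longrightarrow>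
    pos \<kappa> c < pos \<kappa> b \<Longrightarrow> pos \<kappa> b < pos \<kappa> c' \<Longrightarrow> False"
  unfolding non_interleaving_def by blast

lemma valid_placement_iff:
  assumes "finite (\<Union>S)" "{} \<notin> S"
  shows "valid_placement S \<kappa> \<longleftrightarrow> (\<forall>x\<in>\<Union>S. 1 \<le> \<kappa> x) \<and> non_interleaving S \<kappa>"
proof -
  have C: "finite (pos \<kappa> ` C)" "pos \<kappa> ` C \<noteq> {}" if "C \<in> S" for C
    using assms that by (auto intro: finite_subset)
  have "non_interleaving S \<kappa> \<longleftrightarrow> (\<forall>B\<in>S. \<forall>C\<in>S. B \<noteq> C \<longrightarrow>
      (\<forall>b\<in>B. \<not> (Min (pos \<kappa> ` C) < pos \<kappa> b \<and> pos \<kappa> b < Max (pos \<kappa> ` C))))"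
  proof
    assume sep: "non_interleaving S \<kappa>"
    show "\<forall>B\<in>S. \<forall>C\<in>S. B \<noteq> C \<longrightarrow>
      (\<forall>b\<in>B. \<not> (Min (pos \<kappa> ` C) < pos \<kappa> b \<and> pos \<kappa> b < Max (pos \<kappa> ` C)))"
    proof (intro ballI impI notI)
      fix B C b
      assume "B \<in> S" "C \<in> S" "B \<noteq> C" "b \<in> B"
        and "Min (pos \<kappa> ` C) < pos \<kappa> b \<and> pos \<kappa> b < Max (pos \<kappa> ` C)"
      moreover obtain c c' where "c \<in> C" "pos \<kappa> c = Min (pos \<kappa> ` C)"
        and "c' \<in> C" "pos \<kappa> c' = Max (pos \<kappa> ` C)"
        using Min_in[OF C[OF \<open>C \<in> S\<close>]] Max_in[OF C[OF \<open>C \<in> S\<close>]] by auto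
      ultimately show False using non_interleavingD[OF sep] by metis
    qed
  next
    assume sep: "\<forall>B\<in>S. \<forall>C\<in>S. B \<noteq> C \<longrightarrow>
      (\<forall>b\<in>B. \<not> (Min (pos \<kappa> ` C) < pos \<kappa> b \<and> pos \<kappa> b < Max (pos \<kappa> ` C)))"
    show "non_interleaving S \<kappa>"
    proof (rule non_interleavingI)
      fix B C b c c'
      assume "B \<in> S" "C \<in> S" "B \<noteq> C" "b \<in> B" "c \<in> C" "c' \<in> C"
        and "pos \<kappa> c < pos \<kappa> b" "pos \<kappa> b < pos \<kappa> c'"
      moreover have "Min (pos \<kappa> ` C) \<le> pos \<kappa> c" "pos \<kappa> c' \<le> Max (pos \<kappa> ` C)"
        using C[OF \<open>C \<in> S\<close>] \<open>c \<in> C\<close> \<open>c' \<in> C\<close> by auto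
      ultimately show False using sep by (meson order.strict_trans1 order.strict_trans2)
    qed
  qed
  then show ?thesis unfolding valid_placement_def by simp
qed

lemma valid_placement_subset:
  "valid_placement S \<kappa> \<Longrightarrow> R \<subseteq> S \<Longrightarrow> valid_placement R \<kappa>"
  unfolding valid_placement_def by blast

lemma valid_placement_segment_ge_1:
  "valid_placement S \<kappa> \<Longrightarrow> x \<in> \<Union>S \<Longrightarrow> 1 \<le> \<kappa> x"
  unfolding valid_placement_def by (drule conjunct1) blast

lemma valid_placement_transfer:
  assumes "finite (\<Union>S)" "{} \<notin> S" "valid_placement S \<kappa>"
    and "\<forall>x\<in>\<Union>S. 1 \<le> \<kappa>' x"
    and "\<And>a b. a \<in> \<Union>S \<Longrightarrow> b \<in> \<Union>S \<Longrightarrow> pos \<kappa>' a < pos \<kappa>' b \<Longrightarrow> pos \<kappa> a < pos \<kappa> b"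
  shows "valid_placement S \<kappa>'"
proof -
  have "non_interleaving S \<kappa>'"
  proof (rule non_interleavingI)
    fix B C b c c'
    assume "B \<in> S" "C \<in> S" "B \<noteq> C" "b \<in> B" "c \<in> C" "c' \<in> C"
      and "pos \<kappa>' c < pos \<kappa>' b" "pos \<kappa>' b < pos \<kappa>' c'"
    moreover have "non_interleaving S \<kappa>" using assms(3) valid_placement_iff[OF assms(1,2)] by blast
    ultimately show False using assms(5) by (meson UnionI non_interleavingD)
  qed
  with assms(4) show ?thesis unfolding valid_placement_iff[OF assms(1,2)] by blast
qed

lemma valid_placement_shift_up:
  assumes "finite (\<Union>R)" "{} \<notin> R" "valid_placement R \<kappa>" "\<forall>x\<in>\<Union>R. \<kappa>' x = \<kappa> x + d"
  shows "valid_placement R \<kappa>'"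
proof (rule valid_placement_transfer[OF assms(1-3)])
  show "\<forall>x\<in>\<Union>R. 1 \<le> \<kappa>' x" using assms(4) valid_placement_segment_ge_1[OF assms(3)] by fastforce
  show "pos \<kappa> a < pos \<kappa> b" if "a \<in> \<Union>R" "b \<in> \<Union>R" "pos \<kappa>' a < pos \<kappa>' b" for a b
    using that assms(4) by (auto simp: pos_def)
qed

lemma valid_placement_insert_before:
  assumes "finite (\<Union>(insert B R))" "{} \<notin> insert B R" "valid_placement R \<kappa>"
    and "\<forall>b\<in>B. 1 \<le> \<kappa> b"
    and "\<And>b x. b \<in> B \<Longrightarrow> x \<in> \<Union>R \<Longrightarrow> pos \<kappa> b < pos \<kappa> x"
  shows "valid_placement (insert B R) \<kappa>"
proof -
  have R: "finite (\<Union>R)" "{} \<notin> R" using assms(1,2) by auto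
  then have R_valid: "\<forall>x\<in>\<Union>R. 1 \<le> \<kappa> x" "non_interleaving R \<kappa>"
    using assms(3) valid_placement_iff by blast+
  have "non_interleaving (insert B R) \<kappa>"
  proof (rule non_interleavingI)
    fix C D c d d'
    assume CD: "C \<in> insert B R" "D \<in> insert B R" "C \<noteq> D" and cdd: "c \<in> C" "d \<in> D" "d' \<in> D"
      and between: "pos \<kappa> d < pos \<kappa> c" "pos \<kappa> c < pos \<kappa> d'"
    consider "C = B" "D \<in> R" | "D = B" "C \<in> R" | "C \<in> R" "D \<in> R" using CD by auto
    then show False
    proof cases
      case 1
      then have "pos \<kappa> c < pos \<kappa> d" using cdd by (intro assms(5)) auto
      then show False using between by simp
    next
      case 2
      then have "pos \<kappa> d' < pos \<kappa> c" using cdd by (intro assms(5)) auto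
      then show False using between by simp
    next
      case 3
      then show False using non_interleavingD[OF R_valid(2) _ _ CD(3) cdd between] by blast
    qed
  qed
  moreover have "\<forall>x\<in>\<Union>(insert B R). 1 \<le> \<kappa> x" using R_valid(1) assms(4) by blast
  ultimately show ?thesis unfolding valid_placement_iff[OF assms(1,2)] by blast
qed

lemma valid_placement_first_block:
  assumes "finite (\<Union>S)" "{} \<notin> S" "S \<noteq> {}" "disjoint S" "valid_placement S \<kappa>"
  obtains B where "B \<in> S" "\<And>b x. b \<in> B \<Longrightarrow> x \<in> \<Union>(S - {B}) \<Longrightarrow> pos \<kappa> b < pos \<kappa> x"
proof -
  have "Min (pos \<kappa> ` \<Union>S) \<in> pos \<kappa> ` \<Union>S" using assms(1-3) by (intro Min_in) auto
  then obtain x\<^sub>0 where "x\<^sub>0 \<in> \<Union>S" and x\<^sub>0_min: "Min (pos \<kappa> ` \<Union>S) = pos \<kappa> x\<^sub>0" by (rule imageE)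
  then obtain B where "B \<in> S" "x\<^sub>0 \<in> B" by blast
  have "pos \<kappa> b < pos \<kappa> x" if b: "b \<in> B" and x: "x \<in> \<Union>(S - {B})" for b x
  proof (rule ccontr)
    assume "\<not> pos \<kappa> b < pos \<kappa> x"
    obtain C where C: "C \<in> S" "C \<noteq> B" "x \<in> C" using x by auto
    have "x \<notin> B" using disjointD[OF assms(4) \<open>B \<in> S\<close> C(1)] C by auto
    then have "pos \<kappa> x \<noteq> pos \<kappa> b" "pos \<kappa> x \<noteq> pos \<kappa> x\<^sub>0"
      using b \<open>x\<^sub>0 \<in> B\<close> by (auto simp: pos_def)
    moreover have "pos \<kappa> x\<^sub>0 \<le> pos \<kappa> x"
      unfolding x\<^sub>0_min[symmetric] using assms(1) C by (intro Min_le) auto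
    ultimately have "pos \<kappa> x\<^sub>0 < pos \<kappa> x" "pos \<kappa> x < pos \<kappa> b"
      using \<open>\<not> pos \<kappa> b < pos \<kappa> x\<close> by (simp_all add: order.strict_iff_order)
    moreover have "non_interleaving S \<kappa>" using assms(5) valid_placement_iff[OF assms(1,2)] by blast
    ultimately show False
      using non_interleavingD[OF _ C(1) \<open>B \<in> S\<close> C(2) C(3) \<open>x\<^sub>0 \<in> B\<close> b] by blast
  qed
  with \<open>B \<in> S\<close> show ?thesis by (rule that)
qed

(* Placed as early as possible from (1, i), the element x goes to segment earliest_segment i x;
   omega i B is then the last element of B, and the next position is
   (1 + delta n i B, omega i B +_n 1). *)
definition earliest_segment :: "nat \<Rightarrow> nat \<Rightarrow> nat" where
  "earliest_segment i x = (if i \<le> x then 1 else 2)"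

lemma start_le_pos_iff: "(1, i) \<le> pos \<kappa> x \<longleftrightarrow> earliest_segment i x \<le> \<kappa> x"
  by (auto simp: pos_def earliest_segment_def)

lemma omega_in_and_less:
  assumes "finite B" "B \<noteq> {}"
  shows "omega i B \<in> B" and "\<not> i \<le> Min B \<Longrightarrow> omega i B < i"
proof -
  have lower: "Max {x\<in>B. x < i} \<in> B \<and> Max {x\<in>B. x < i} < i" if "\<not> i \<le> Min B"
  proof -
    have "Min B \<in> {x\<in>B. x < i}" using that Min_in[OF assms] by simp
    then have "Max {x\<in>B. x < i} \<in> {x\<in>B. x < i}" using assms(1) by (intro Max_in) auto
    then show ?thesis by simp
  qed
  show "omega i B \<in> B" using lower Max_in[OF assms] by (auto simp: omega_def)
  show "omega i B < i" if "\<not> i \<le> Min B" using that lower by (auto simp: omega_def)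
qed

lemma pos_earliest_segment_le_omega:
  assumes "finite B" "b \<in> B"
  shows "pos (earliest_segment i) b \<le> pos (earliest_segment i) (omega i B)"
proof (cases "i \<le> Min B \<or> Max B < i")
  case True
  moreover have "Min B \<le> b" "b \<le> Max B" using assms by auto
  ultimately show ?thesis by (auto simp: omega_def pos_def earliest_segment_def)
next
  case False
  then have "omega i B < i" using assms omega_in_and_less(2)[of B i] by auto
  moreover have "b \<le> omega i B" if "b < i" using assms that False by (auto simp: omega_def)
  ultimately show ?thesis by (auto simp: pos_def earliest_segment_def)
qed

fun next_pos :: "nat \<Rightarrow> nat \<times> nat \<Rightarrow> nat \<times> nat" where
  "next_pos n (k, x) = (if x < n then (k, Suc x) else (Suc k, 1))"

lemma less_iff_next_pos_le:
  assumes "x \<le> n" "y \<in> {1..n}"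
  shows "(k, x) < (l, y) \<longleftrightarrow> next_pos n (k, x) \<le> (l, y)"
  using assms by auto

lemma plus_n1_in: "1 \<le> n \<Longrightarrow> plus_n1 n a \<in> {1..n}"
  by (simp add: plus_n1_def)

lemma next_pos_omega:
  assumes "finite B" "B \<noteq> {}" "B \<subseteq> {1..n}" "i \<in> {1..n}"
  shows "next_pos n (pos (earliest_segment i) (omega i B)) = (Suc (delta n i B), plus_n1 n (omega i B))"
proof -
  have w: "omega i B \<in> {1..n}" using omega_in_and_less(1)[OF assms(1,2)] assms(3) by blast
  have "plus_n1 n (omega i B) = (if omega i B < n then Suc (omega i B) else 1)"
    using w by (auto simp: plus_n1_def mod_Suc)
  moreover have "i \<le> omega i B \<longleftrightarrow> i \<le> Min B" "Max B < n \<longleftrightarrow> omega i B < n" if "i \<le> Min B"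
    using that assms by (auto simp: omega_def)
  moreover have "omega i B < i" if "\<not> i \<le> Min B"
    using that omega_in_and_less(2)[OF assms(1,2)] by blast
  ultimately show ?thesis using assms(4)
    by (auto simp: pos_def earliest_segment_def delta_def)
qed

lemma omega_pos_less_iff:
  assumes "finite B" "B \<noteq> {}" "B \<subseteq> {1..n}" "i \<in> {1..n}" "x \<in> {1..n}"
  shows "pos (earliest_segment i) (omega i B) < (k, x) \<longleftrightarrow>
    (Suc (delta n i B), plus_n1 n (omega i B)) \<le> (k, x)"
proof -
  have "omega i B \<in> {1..n}" using omega_in_and_less(1)[OF assms(1,2)] assms(3) by blast
  then show ?thesis
    using less_iff_next_pos_le[OF _ assms(5)] next_pos_omega[OF assms(1-4)] unfolding pos_def by simp
qed

lemma delta_plus_K_empty: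
  assumes "finite B" "B \<noteq> {}" "B \<subseteq> {1..n}" "i \<in> {1..n}"
  shows "delta n i B + K (plus_n1 n (omega i B)) {} = earliest_segment i (omega i B)"
proof -
  have "omega i B \<in> {1..n}" using omega_in_and_less(1)[OF assms(1,2)] assms(3) by blast
  then show ?thesis using next_pos_omega[OF assms] by (auto simp: pos_def K_def split: if_splits)
qed

definition placement_from :: "nat \<Rightarrow> nat set set \<Rightarrow> (nat \<Rightarrow> nat) \<Rightarrow> bool" where
  "placement_from i S \<kappa> \<longleftrightarrow> valid_placement S \<kappa> \<and> (\<forall>x\<in>\<Union>S. (1, i) \<le> pos \<kappa> x)"

lemma placement_from_empty: "placement_from i {} \<kappa>"
  by (simp add: placement_from_def valid_placement_def)

lemma segments_used_ge: "finite (\<Union>S) \<Longrightarrow> x \<in> \<Union>S \<Longrightarrow> \<kappa> x \<le> segments_used S \<kappa>"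
  unfolding segments_used_def by (rule Max_ge) auto

lemma segments_used_attained:
  assumes "finite (\<Union>S)" "\<Union>S \<noteq> {}"
  obtains x where "x \<in> \<Union>S" "segments_used S \<kappa> = \<kappa> x"
proof -
  have "Max (\<kappa> ` \<Union>S) \<in> \<kappa> ` \<Union>S" using assms by (intro Max_in) auto
  then show ?thesis using that unfolding segments_used_def by blast
qed

lemma segments_used_mono:
  assumes "finite (\<Union>S)" "R \<subseteq> S" "\<Union>R \<noteq> {}"
  shows "segments_used R \<kappa> \<le> segments_used S \<kappa>"
proof -
  have "finite (\<Union>R)" using assms(1,2) by (meson Union_mono finite_subset)
  then obtain x where "x \<in> \<Union>R" "segments_used R \<kappa> = \<kappa> x"
    using segments_used_attained assms(3) by blast
  then show ?thesis using segments_used_ge[OF assms(1)] assms(2) by auto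
qed

lemma K_le_segments_used:
  "S \<noteq> {} \<Longrightarrow> placement_from i S \<kappa> \<Longrightarrow> K i S \<le> segments_used S \<kappa>"
  unfolding K_def placement_from_def by (auto intro: Least_le)

lemma placement_from_insert_block:
  assumes S: "block_family n (insert B R)" and "B \<notin> R" and i: "i \<in> {1..n}"
    and \<kappa>: "placement_from (plus_n1 n (omega i B)) R \<kappa>"
  shows "placement_from i (insert B R)
           (\<lambda>x. if x \<in> B then earliest_segment i x else \<kappa> x + delta n i B)"
    (is "placement_from i _ ?\<kappa>")
proof -
  let ?w = "omega i B" and ?d = "delta n i B" and ?j = "plus_n1 n (omega i B)"
  have fin: "finite (\<Union>(insert B R))" "finite (\<Union>R)" and ne: "{} \<notin> insert B R" "{} \<notin> R"
    using S block_family_finite[OF S] unfolding block_family_def by auto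
  have B: "finite B" "B \<noteq> {}" "B \<subseteq> {1..n}" using S fin unfolding block_family_def by auto
  have R_in: "x \<in> {1..n}" "x \<notin> B" if "x \<in> \<Union>R" for x
    using that S \<open>B \<notin> R\<close> disjointD[of "insert B R" B] unfolding block_family_def by blast+
  have w_before: "pos (earliest_segment i) ?w < pos ?\<kappa> x" if x: "x \<in> \<Union>R" for x
  proof -
    have "(1, ?j) \<le> pos \<kappa> x" using \<kappa> x unfolding placement_from_def by blast
    then have "(Suc ?d, ?j) \<le> (?\<kappa> x, x)" using R_in(2)[OF x] by (auto simp: pos_def)
    then show ?thesis unfolding pos_def[of ?\<kappa>] by (rule omega_pos_less_iff[OF B i R_in(1)[OF x], THEN iffD2])
  qed
  have B_before: "pos ?\<kappa> b < pos ?\<kappa> x" if "b \<in> B" "x \<in> \<Union>R" for b x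
  proof -
    have "pos ?\<kappa> b \<le> pos (earliest_segment i) ?w"
      using pos_earliest_segment_le_omega[OF B(1) that(1)] that(1) by (simp add: pos_def)
    also have "\<dots> < pos ?\<kappa> x" using w_before[OF that(2)] .
    finally show ?thesis .
  qed
  have "valid_placement R \<kappa>" using \<kappa> unfolding placement_from_def by blast
  moreover have "\<forall>x\<in>\<Union>R. ?\<kappa> x = \<kappa> x + ?d" using R_in(2) by auto
  ultimately have "valid_placement R ?\<kappa>" by (rule valid_placement_shift_up[OF fin(2) ne(2)])
  then have "valid_placement (insert B R) ?\<kappa>"
    using B_before by (intro valid_placement_insert_before[OF fin(1) ne(1)])
      (auto simp: earliest_segment_def)
  moreover have "(1, i) \<le> pos ?\<kappa> x" if "x \<in> \<Union>(insert B R)" for x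
  proof (cases "x \<in> B")
    case True
    then show ?thesis unfolding start_le_pos_iff by simp
  next
    case False
    have "(1, i) \<le> pos (earliest_segment i) ?w" unfolding start_le_pos_iff ..
    also have "\<dots> < pos ?\<kappa> x" using False that by (intro w_before) auto
    finally show ?thesis by simp
  qed
  ultimately show ?thesis unfolding placement_from_def by blast
qed

lemma placement_from_exists:
  assumes "block_family n S" "i \<in> {1..n}"
  shows "\<exists>\<kappa>. placement_from i S \<kappa>"
  using block_family_finite(2)[OF assms(1)] assms
proof (induction S arbitrary: i rule: finite_induct)
  case empty
  then show ?case using placement_from_empty by blast
next
  case (insert B R)
  have "plus_n1 n (omega i B) \<in> {1..n}" using insert.prems(2) by (intro plus_n1_in) simp
  then obtain \<kappa> where "placement_from (plus_n1 n (omega i B)) R \<kappa>"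
    using insert.IH insert.prems(1) block_family_subset by blast
  then show ?case using placement_from_insert_block insert by blast
qed

lemma K_attained:
  assumes "block_family n S" "S \<noteq> {}" "i \<in> {1..n}"
  obtains \<kappa> where "placement_from i S \<kappa>" "segments_used S \<kappa> = K i S"
proof -
  have "\<exists>m \<kappa>. placement_from i S \<kappa> \<and> segments_used S \<kappa> = m"
    using placement_from_exists[OF assms(1,3)] by blast
  from LeastI_ex[OF this] show ?thesis
    using that assms(2) unfolding K_def placement_from_def by auto
qed

lemma placement_from_bounded_by_K:
  assumes "block_family n R" "j \<in> {1..n}"
  obtains \<kappa> where "placement_from j R \<kappa>" "\<forall>x\<in>\<Union>R. \<kappa> x \<le> K j R"
proof (cases "R = {}")
  case True
  then show ?thesis using that placement_from_empty by simp
next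
  case False
  then obtain \<kappa> where \<kappa>: "placement_from j R \<kappa>" and "segments_used R \<kappa> = K j R"
    using K_attained[OF assms(1) _ assms(2)] by blast
  then have "\<forall>x\<in>\<Union>R. \<kappa> x \<le> K j R"
    using segments_used_ge[OF block_family_finite(1)[OF assms(1)]] by metis
  then show ?thesis using that \<kappa> by blast
qed

lemma K_ge_1:
  assumes "block_family n R" "R \<noteq> {}" "j \<in> {1..n}"
  shows "1 \<le> K j R"
proof -
  obtain \<kappa> where "placement_from j R \<kappa>" "\<forall>x\<in>\<Union>R. \<kappa> x \<le> K j R"
    using placement_from_bounded_by_K[OF assms(1,3)] .
  moreover obtain x where "x \<in> \<Union>R" using block_family_Union_empty_iff[OF assms(1)] assms(2) by blast
  ultimately show ?thesis
    using valid_placement_segment_ge_1 unfolding placement_from_def by (meson order_trans)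
qed

lemma K_le_shift_down:
  assumes "block_family n R" "R \<noteq> {}" "valid_placement R \<kappa>"
    and after: "\<forall>x\<in>\<Union>R. (Suc d, j) \<le> pos \<kappa> x"
  shows "d + K j R \<le> segments_used R \<kappa>"
proof -
  have R: "finite (\<Union>R)" "\<Union>R \<noteq> {}" "{} \<notin> R"
    using assms(1,2) block_family_finite(1) block_family_Union_empty_iff
    unfolding block_family_def by auto
  let ?\<kappa> = "\<lambda>x. \<kappa> x - d"
  have after': "d < \<kappa> x" "(1, j) \<le> pos ?\<kappa> x" if "x \<in> \<Union>R" for x
  proof -
    have "(Suc d, j) \<le> (\<kappa> x, x)" using after that unfolding pos_def by blast
    then show "d < \<kappa> x" "(1, j) \<le> pos ?\<kappa> x" by (auto simp: pos_def)
  qed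
  have "placement_from j R ?\<kappa>"
    unfolding placement_from_def
  proof
    show "valid_placement R ?\<kappa>"
    proof (rule valid_placement_transfer[OF R(1,3) \<open>valid_placement R \<kappa>\<close>])
      show "\<forall>x\<in>\<Union>R. 1 \<le> ?\<kappa> x" using after'(1) by fastforce
      show "pos \<kappa> a < pos \<kappa> b" if "a \<in> \<Union>R" "b \<in> \<Union>R" "pos ?\<kappa> a < pos ?\<kappa> b" for a b
        using that after'(1)[of a] after'(1)[of b] by (auto simp: pos_def)
    qed
    show "\<forall>x\<in>\<Union>R. (1, j) \<le> pos ?\<kappa> x" using after'(2) by blast
  qed
  then have "K j R \<le> segments_used R ?\<kappa>" using K_le_segments_used assms(2) by blast
  moreover obtain x where "x \<in> \<Union>R" "segments_used R ?\<kappa> = ?\<kappa> x"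
    using segments_used_attained[OF R(1,2)] .
  moreover have "\<kappa> x \<le> segments_used R \<kappa>" using segments_used_ge[OF R(1) \<open>x \<in> \<Union>R\<close>] .
  ultimately show ?thesis using after'(1)[OF \<open>x \<in> \<Union>R\<close>] by linarith
qed

lemma K_le_delta_plus_K:
  assumes S: "block_family n S" and "B \<in> S" and i: "i \<in> {1..n}"
  shows "K i S \<le> delta n i B + K (plus_n1 n (omega i B)) (S - {B})"
proof -
  define w d j R where "w = omega i B" and "d = delta n i B" and "j = plus_n1 n w" and "R = S - {B}"
  have SR: "S = insert B R" "B \<notin> R" using \<open>B \<in> S\<close> unfolding R_def by auto
  have R: "block_family n R" using S block_family_subset unfolding R_def by blast
  have B: "finite B" "B \<noteq> {}" "B \<subseteq> {1..n}"
    using S \<open>B \<in> S\<close> block_family_finite(1)[OF S] unfolding block_family_def by (auto intro: finite_subset)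
  have j: "j \<in> {1..n}" using i unfolding j_def by (intro plus_n1_in) simp
  obtain \<kappa> where \<kappa>: "placement_from j R \<kappa>" and \<kappa>_le: "\<forall>x\<in>\<Union>R. \<kappa> x \<le> K j R"
    using placement_from_bounded_by_K[OF R j] .
  define \<kappa>' where "\<kappa>' x = (if x \<in> B then earliest_segment i x else \<kappa> x + d)" for x
  have placed: "placement_from i S \<kappa>'"
    using placement_from_insert_block[of n B R i \<kappa>] S SR i \<kappa>
    unfolding \<kappa>'_def d_def j_def w_def by simp
  have w_le: "earliest_segment i w \<le> d + K j R"
  proof (cases "R = {}")
    case True
    then show ?thesis using delta_plus_K_empty[OF B i] unfolding w_def d_def j_def by simp
  next
    case False
    have "earliest_segment i w \<le> Suc d"
      using next_pos_omega[OF B i] unfolding w_def d_def pos_def by (auto split: if_splits)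
    then show ?thesis using K_ge_1[OF R False j] by simp
  qed
  have "\<kappa>' x \<le> d + K j R" if "x \<in> \<Union>S" for x
  proof (cases "x \<in> B")
    case True
    then have "earliest_segment i x \<le> earliest_segment i w"
      using pos_earliest_segment_le_omega[OF B(1) True, of i] unfolding w_def pos_def by auto
    then show ?thesis using True w_le unfolding \<kappa>'_def by simp
  next
    case False
    then show ?thesis using that \<kappa>_le SR unfolding \<kappa>'_def by auto
  qed
  then have "segments_used S \<kappa>' \<le> d + K j R"
    using SR B(2) block_family_finite(1)[OF S] unfolding segments_used_def by (auto intro: Max.boundedI)
  then show ?thesis
    using K_le_segments_used[OF _ placed] \<open>B \<in> S\<close> unfolding R_def d_def j_def w_def by fastforce
qed

lemma delta_plus_K_le_segments_used:
  assumes S: "block_family n S" "S \<noteq> {}" and i: "i \<in> {1..n}" and \<kappa>: "placement_from i S \<kappa>"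
  obtains B where "B \<in> S" "delta n i B + K (plus_n1 n (omega i B)) (S - {B}) \<le> segments_used S \<kappa>"
proof -
  have fin: "finite (\<Union>S)" and "{} \<notin> S" "disjoint S"
    using block_family_finite(1)[OF S(1)] S(1) unfolding block_family_def by auto
  have valid: "valid_placement S \<kappa>" using \<kappa> unfolding placement_from_def by blast
  obtain B where B_S: "B \<in> S"
    and first: "\<And>b x. b \<in> B \<Longrightarrow> x \<in> \<Union>(S - {B}) \<Longrightarrow> pos \<kappa> b < pos \<kappa> x"
    using valid_placement_first_block[OF fin \<open>{} \<notin> S\<close> S(2) \<open>disjoint S\<close> valid] by blast
  define w d j R where "w = omega i B" and "d = delta n i B" and "j = plus_n1 n w" and "R = S - {B}"
  have B: "finite B" "B \<noteq> {}" "B \<subseteq> {1..n}"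
    using S B_S fin unfolding block_family_def by (auto intro: finite_subset)
  have w: "w \<in> B" using omega_in_and_less(1)[OF B(1,2)] unfolding w_def .
  have w_le: "earliest_segment i w \<le> \<kappa> w"
    using \<kappa> w B_S unfolding placement_from_def start_le_pos_iff[symmetric] by blast
  have after: "\<forall>x\<in>\<Union>R. (Suc d, j) \<le> pos \<kappa> x"
  proof
    fix x assume x: "x \<in> \<Union>R"
    have "x \<in> {1..n}" using x S(1) unfolding R_def block_family_def by blast
    have "pos (earliest_segment i) w \<le> pos \<kappa> w" using w_le by (auto simp: pos_def)
    also have "\<dots> < pos \<kappa> x" using first[OF w] x unfolding R_def .
    finally have "pos (earliest_segment i) w < (\<kappa> x, x)" unfolding pos_def .
    from omega_pos_less_iff[OF B i \<open>x \<in> {1..n}\<close>, THEN iffD1, OF this[unfolded w_def]]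
    show "(Suc d, j) \<le> pos \<kappa> x" unfolding w_def d_def j_def pos_def .
  qed
  have "d + K j R \<le> segments_used S \<kappa>"
  proof (cases "R = {}")
    case True
    have "\<kappa> w \<le> segments_used S \<kappa>" using segments_used_ge[OF fin] w B_S by blast
    then show ?thesis using True delta_plus_K_empty[OF B i] w_le unfolding w_def d_def j_def by simp
  next
    case False
    have R: "block_family n R" using block_family_subset S(1) unfolding R_def by blast
    have "valid_placement R \<kappa>" using valid_placement_subset[OF valid] unfolding R_def by blast
    then have "d + K j R \<le> segments_used R \<kappa>" using K_le_shift_down[OF R False _ after] by blast
    also have "\<dots> \<le> segments_used S \<kappa>"
      using segments_used_mono[OF fin] block_family_Union_empty_iff[OF R] False unfolding R_def by blast
    finally show ?thesis .
  qed
  then show thesis using that[OF B_S] unfolding R_def d_def j_def w_def by simp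
qed

theorem mainTheorem2:
  fixes n t :: nat and Bs Bs' :: "nat set set" and i :: nat
  assumes "n \<ge> 1" and "t \<ge> 1"
    and "partition_on {1..n} Bs" and "card Bs = t"
    and "Bs' \<subseteq> Bs" and "Bs' \<noteq> {}"
    and "i \<in> {1..n}"
  shows "K i Bs' = Min ((\<lambda>B. delta n i B + K (plus_n1 n (omega i B)) (Bs' - {B})) ` Bs')"
proof -
  let ?f = "\<lambda>B. delta n i B + K (plus_n1 n (omega i B)) (Bs' - {B})"
  have S: "block_family n Bs'"
    using assms(3,5) block_family_if_partition_on block_family_subset by blast
  have fin: "finite (?f ` Bs')" "?f ` Bs' \<noteq> {}" using block_family_finite(2)[OF S] assms(6) by auto
  have "K i Bs' \<le> Min (?f ` Bs')"
    using K_le_delta_plus_K[OF S _ assms(7)] fin by (simp add: Min_ge_iff)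
  moreover obtain \<kappa> where "placement_from i Bs' \<kappa>" "segments_used Bs' \<kappa> = K i Bs'"
    using K_attained[OF S assms(6,7)] .
  moreover obtain B where "B \<in> Bs'" "?f B \<le> segments_used Bs' \<kappa>"
    using delta_plus_K_le_segments_used[OF S assms(6,7) \<open>placement_from i Bs' \<kappa>\<close>] .
  then have "Min (?f ` Bs') \<le> segments_used Bs' \<kappa>" using fin(1) by (meson Min_le image_eqI order_trans)
  ultimately show ?thesis by simp
qed

end
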